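(* The family of partial orders $\mathfrak{P}=\{\tilde{\mathcal{P}}_i:i\in\mathbb{N}\}$ is both $E_0$-learnable and $E_{range}$-learnable, but it is not $\mathbf{nUs}$-learnable.
   Context: Partial orders are structures in the language $\{\leq\}$. For $k>0$, $\mathcal{P}_k$ is the partial order on $\{0,\dots,2k+1\}$ that is the reflexive transitive closure of the relations $2i\leq 2i+2$ for $i<k$ and $2i\leq 2i+1$ for $i\leq k$. $\mathcal{P}_0$ is the partial order on $\mathbb{N}$ that is the reflexive transitive closure of $2i\leq 2i+2$ for all $i$ and $2j\leq 2j-1$ for all $j>0$. For a partial order $L$, $\tilde{L}$ is $L$ together with infinitely many new elements that are pairwise incomparable and incomparable to the elements of $L$ (presented with domain $\mathbb{N}$). All structures are countable, have domain $\mathbb{N}$, and are identified with their atomic diagrams (elements of $2^{\mathbb{N}}$). A family of structures $\mathfrak{K}$ is a countable set of pairwise nonisomorphic such structures; $\mathcal{S}\restriction_s$ is the finite substructure on $\{0,\dots,s\}$; $\mathrm{LD}(\mathfrak{K})\subseteq2^{\mathbb{N}}$ is the set of structures with domain $\mathbb{N}$ isomorphic to a member of $\mathfrak{K}$ (subspace topology). For an equivalence relation $E$ on a space $X$, $\mathfrak{K}$ is $E$-learnable if there is a continuous $\Gamma:\mathrm{LD}(\mathfrak{K})\to X$ with $\mathcal{S}\cong\mathcal{S}'\iff\Gamma(\mathcal{S})E\Gamma(\mathcal{S}')$ on $\mathrm{LD}(\mathfrak{K})$. On $\mathbb{N}^{\mathbb{N}}$: $p\,E_0\,q\iff\exists m\forall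 n\ge m\ p(n)=q(n)$; $p\,E_{range}\,q\iff\{p(m):m\}=\{q(m):m\}$. A learner is an arbitrary function from $\{\mathcal{S}\restriction_s:\mathcal{S}\in\mathrm{LD}(\mathfrak{K})\}$ to $\{\ulcorner\mathcal{A}\urcorner:\mathcal{A}\in\mathfrak{K}\}\cup\{?\}$. $\mathfrak{K}$ is $\mathbf{nUs}$-learnable if some learner $\mathbf{M}$ satisfies: for every $\mathcal{S}\in\mathrm{LD}(\mathfrak{K})$ with $\mathcal{S}\cong\mathcal{A}\in\mathfrak{K}$, $\mathbf{M}(\mathcal{S}\restriction_n)$ is eventually constantly $\ulcorner\mathcal{A}\urcorner$, and once $\mathbf{M}$ first outputs $\ulcorner\mathcal{A}\urcorner$ on $\mathcal{S}$ it outputs $\ulcorner\mathcal{A}\urcorner$ at all later stages. *)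

theory Defs
  imports "HOL-Analysis.Analysis"
begin

text \<open>A countable structure in the language with one binary relation symbol, with domain
  the natural numbers, is identified with (the relevant part of) its atomic diagram, an
  element of Cantor space: the characteristic function of the relation on pairs.\<close>
type_synonym struc = "nat \<times> nat \<Rightarrow> bool"

definition cantor :: "struc topology" where
  "cantor = product_topology (\<lambda>_. discrete_topology (UNIV :: bool set)) UNIV"

definition baire :: "(nat \<Rightarrow> nat) topology" where
  "baire = product_topology (\<lambda>_. discrete_topology (UNIV :: nat set)) UNIV"

definition iso :: "struc \<Rightarrow> struc \<Rightarrow> bool" where
  "iso S T \<longleftrightarrow> (\<exists>f. bij f \<and> (\<forall>x y. S (x, y) = T (f x, f y)))"

definition LD :: "struc set \<Rightarrow> struc set" where
  "LD K = {S. \<exists>A\<in>K. iso S A}"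

definition E_learnable :: "'b topology \<Rightarrow> ('b \<Rightarrow> 'b \<Rightarrow> bool) \<Rightarrow> struc set \<Rightarrow> bool" where
  "E_learnable X E K \<longleftrightarrow>
     (\<exists>\<Gamma>. continuous_map (subtopology cantor (LD K)) X \<Gamma> \<and>
          (\<forall>S\<in>LD K. \<forall>S'\<in>LD K. iso S S' \<longleftrightarrow> E (\<Gamma> S) (\<Gamma> S')))"

definition E0 :: "(nat \<Rightarrow> nat) \<Rightarrow> (nat \<Rightarrow> nat) \<Rightarrow> bool" where
  "E0 p q \<longleftrightarrow> (\<exists>m. \<forall>n\<ge>m. p n = q n)"

definition Erange :: "(nat \<Rightarrow> nat) \<Rightarrow> (nat \<Rightarrow> nat) \<Rightarrow> bool" where
  "Erange p q \<longleftrightarrow> range p = range q"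

definition restr :: "struc \<Rightarrow> nat \<Rightarrow> nat \<times> struc" where
  "restr S s = (s, \<lambda>(x, y). x \<le> s \<and> y \<le> s \<and> S (x, y))"

text \<open>Learners output either a member of the family (standing for its code) or \<open>None\<close> (\<open>?\<close>).\<close>
definition nUs_learnable :: "struc set \<Rightarrow> bool" where
  "nUs_learnable K \<longleftrightarrow>
     (\<exists>M :: nat \<times> struc \<Rightarrow> struc option.
        (\<forall>x. case M x of None \<Rightarrow> True | Some A \<Rightarrow> A \<in> K) \<and>
        (\<forall>S\<in>LD K. \<forall>A\<in>K. iso S A \<longrightarrow>
            (\<exists>n0. \<forall>n\<ge>n0. M (restr S n) = Some A) \<and>
            (\<forall>n. M (restr S n) = Some A \<longrightarrow> (\<forall>m\<ge>n. M (restr S m) = Some A))))"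

definition Pstep :: "nat \<Rightarrow> nat \<Rightarrow> nat \<Rightarrow> bool" where
  "Pstep k a b \<longleftrightarrow>
     (if k = 0 then (even a \<and> b = a + 2) \<or> (even a \<and> a > 0 \<and> b = a - 1)
      else (even a \<and> a div 2 < k \<and> b = a + 2) \<or> (even a \<and> a div 2 \<le> k \<and> b = a + 1))"

definition Prel :: "nat \<Rightarrow> nat \<Rightarrow> nat \<Rightarrow> bool" where
  "Prel k x y \<longleftrightarrow>
     (if k = 0 then (Pstep 0)\<^sup>*\<^sup>* x y
      else x \<le> 2 * k + 1 \<and> y \<le> 2 * k + 1 \<and> (Pstep k)\<^sup>*\<^sup>* x y)"

text \<open>\<open>P~_k\<close> presented with domain \<open>\<nat>\<close>: for \<open>k > 0\<close> the elements \<open>\<ge> 2k+2\<close> are the new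
  ones; for \<open>k = 0\<close> element \<open>n\<close> of \<open>P_0\<close> is \<open>2n\<close> and the odd numbers are the new ones.\<close>
definition Ptilde :: "nat \<Rightarrow> struc" where
  "Ptilde k = (\<lambda>(x, y).
     if k = 0 then (if even x \<and> even y then Prel 0 (x div 2) (y div 2) else x = y)
     else (if x \<le> 2 * k + 1 \<and> y \<le> 2 * k + 1 then Prel k x y else x = y))"

definition Pfam :: "struc set" where
  "Pfam = range Ptilde"

end

theory Submission
  imports Defs
begin

(* The three parts rest on one invariant: the number of elements among 0, ..., n that are
   comparable to another element among 0, ..., n. It depends only on the finite substructure on
   {0..n}, so codes built from it are continuous; in a copy of P~_k with k > 0 it stabilises at
   2k + 2, in a copy of P~_0 it is unbounded. Enumerating min j (count at n) over all pairs (j, n)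
   gives a sequence with range {0..2k+2}, resp. all of N, hence E_range-learnability. For E_0, a copy
   of P~_0 is in addition recognised in the limit by a finite pattern (some a < b with every other
   non-isolated element above b), so the code that is 0 when the pattern is visible and the count
   plus one otherwise is eventually 0, resp. eventually 2k + 3.

   Every finite part of P~_0 embeds into P~_k for large k, and P~_k embeds into P~_0. So a copy of
   P~_0 can start with the segment on which a learner first conjectures P~_0 and then follow a copy
   of P~_k until the learner conjectures P~_k: the learner abandons a correct conjecture, which
   nUs-learning forbids. *)

section \<open>The orders \<open>P_k\<close>\<close>

lemma rtranclp_step2_chain:
  fixes a :: nat
  assumes "\<And>i. i < m \<Longrightarrow> r (a + 2*i) (a + 2*i + 2)"
  shows "r\<^sup>*\<^sup>* a (a + 2*m)"
  using assms
proof (induction m)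
  case (Suc m)
  then have "r\<^sup>*\<^sup>* a (a + 2*m)" and "r (a + 2*m) (a + 2*Suc m)" by simp_all
  then show ?case by (rule rtranclp.rtrancl_into_rtrancl)
qed simp

lemma rtranclp_Pstep_0_iff: "(Pstep 0)\<^sup>*\<^sup>* a b \<longleftrightarrow> a = b \<or> (even a \<and> a \<le> b + 1)"
proof
  assume "(Pstep 0)\<^sup>*\<^sup>* a b"
  then show "a = b \<or> (even a \<and> a \<le> b + 1)"
    by (induction rule: rtranclp_induct) (auto simp: Pstep_def, presburger)
next
  assume ab: "a = b \<or> (even a \<and> a \<le> b + 1)"
  have up: "(Pstep 0)\<^sup>*\<^sup>* a (a + 2*m)" if "even a" for m
    using that by (intro rtranclp_step2_chain) (simp add: Pstep_def)
  show "(Pstep 0)\<^sup>*\<^sup>* a b"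
  proof (cases "a = b")
    case False
    with ab have a: "even a" "a \<le> b + 1" by auto
    show ?thesis
    proof (cases "even b")
      case True
      with a False have "b = a + 2 * ((b - a) div 2)" by presburger
      then show ?thesis using up[OF a(1)] by metis
    next
      case False
      with a have "b + 1 = a + 2 * ((b + 1 - a) div 2)" by presburger
      then have "(Pstep 0)\<^sup>*\<^sup>* a (b + 1)" using up[OF a(1)] by metis
      moreover have "Pstep 0 (b + 1) b" using False by (simp add: Pstep_def)
      ultimately show ?thesis by (rule rtranclp.rtrancl_into_rtrancl)
    qed
  qed simp
qed

lemma rtranclp_Pstep_pos_iff:
  assumes "k > 0"
  shows "(Pstep k)\<^sup>*\<^sup>* a b \<longleftrightarrow> a = b \<or> (even a \<and> a \<le> b \<and> b \<le> 2*k + 1)"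
proof
  assume "(Pstep k)\<^sup>*\<^sup>* a b"
  then show "a = b \<or> (even a \<and> a \<le> b \<and> b \<le> 2*k + 1)"
    by (induction rule: rtranclp_induct) (use assms in \<open>auto simp: Pstep_def\<close>)
next
  assume ab: "a = b \<or> (even a \<and> a \<le> b \<and> b \<le> 2*k + 1)"
  have up: "(Pstep k)\<^sup>*\<^sup>* a (a + 2*m)" if "even a" "a + 2*m \<le> 2*k" for m
    using that assms by (intro rtranclp_step2_chain) (auto simp: Pstep_def elim!: evenE)
  show "(Pstep k)\<^sup>*\<^sup>* a b"
  proof (cases "a = b")
    case False
    with ab have a: "even a" "a \<le> b" "b \<le> 2*k + 1" by auto
    show ?thesis
    proof (cases "even b")
      case True
      with a have "b = a + 2 * ((b - a) div 2)" "b \<le> 2*k" by presburger+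
      then show ?thesis using up[OF a(1)] by metis
    next
      case False
      with a have "b - 1 = a + 2 * ((b - 1 - a) div 2)" "b - 1 \<le> 2*k" by presburger+
      then have "(Pstep k)\<^sup>*\<^sup>* a (b - 1)" using up[OF a(1)] by metis
      moreover have "Pstep k (b - 1) b" using False a assms by (auto simp: Pstep_def elim!: oddE)
      ultimately show ?thesis by (rule rtranclp.rtrancl_into_rtrancl)
    qed
  qed simp
qed

lemma Ptilde_pos_iff:
  assumes "k > 0"
  shows "Ptilde k (x, y) \<longleftrightarrow> x = y \<or> (even x \<and> x \<le> y \<and> y \<le> 2*k + 1)"
  using assms rtranclp_Pstep_pos_iff[OF assms, of x y] by (auto simp: Ptilde_def Prel_def)

lemma Ptilde_0_iff:
  "Ptilde 0 (x, y) \<longleftrightarrow> x = y \<or> (even x \<and> even y \<and> even (x div 2) \<and> x div 2 \<le> y div 2 + 1)"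
  using rtranclp_Pstep_0_iff[of "x div 2" "y div 2"] by (auto simp: Ptilde_def Prel_def)

section \<open>Isomorphic copies and finite restrictions\<close>

lemma iso_refl: "iso S S"
  unfolding iso_def by (rule exI[of _ id]) auto

lemma iso_sym: "iso S T \<Longrightarrow> iso T S"
  unfolding iso_def
  by (metis bij_inv_eq_iff bij_imp_bij_inv)

lemma iso_trans: "iso S T \<Longrightarrow> iso T U \<Longrightarrow> iso S U"
  unfolding iso_def by (metis bij_comp comp_apply)

lemma iso_pullback: "bij f \<Longrightarrow> iso (\<lambda>(x, y). A (f x, f y)) A"
  unfolding iso_def by auto

lemma bij_extending_finite_inj_on:
  fixes h :: "nat \<Rightarrow> nat"
  assumes "finite A" "inj_on h A"
  obtains f where "bij f" "\<And>x. x \<in> A \<Longrightarrow> f x = h x"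
proof -
  have inf: "infinite (- A)" "infinite (- h ` A)"
    using assms(1) by (simp_all add: Compl_eq_Diff_UNIV Diff_infinite_finite)
  have "bij_betw (from_nat_into (- A)) UNIV (- A)" "bij_betw (from_nat_into (- h ` A)) UNIV (- h ` A)"
    using inf by (auto intro!: bij_betw_from_nat_into)
  then obtain g where g: "bij_betw g (- A) (- h ` A)"
    using bij_betw_inv_into bij_betw_trans by blast
  define f where "f x = (if x \<in> A then h x else g x)" for x
  have "bij_betw f A (h ` A)"
    using assms(2) by (simp add: f_def bij_betw_def inj_on_def)
  moreover have "bij_betw f (- A) (- h ` A)"
    using g by (rule bij_betw_cong[THEN iffD1, rotated]) (simp add: f_def)
  ultimately have "bij_betw f (A \<union> - A) (h ` A \<union> - h ` A)"
    by (rule bij_betw_combine) auto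
  then show thesis by (intro that[of f]) (simp_all add: f_def)
qed

lemma restr_eq_iff: "restr S n = restr T n \<longleftrightarrow> (\<forall>x\<le>n. \<forall>y\<le>n. S (x, y) = T (x, y))"
  by (auto simp: restr_def fun_eq_iff)

lemma restr_eq_le: "restr S m = restr T m \<Longrightarrow> n \<le> m \<Longrightarrow> restr S n = restr T n"
  by (simp add: restr_eq_iff)

lemma iso_copy_extending_partial_embedding:
  assumes "inj_on h {..n}" and "\<And>x y. x \<le> n \<Longrightarrow> y \<le> n \<Longrightarrow> T (h x, h y) = S (x, y)"
  obtains S' where "iso S' T" "restr S' n = restr S n"
proof -
  obtain f where "bij f" "\<And>x. x \<le> n \<Longrightarrow> f x = h x"
    using bij_extending_finite_inj_on[OF _ assms(1)] by auto
  with assms(2) show thesis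
    by (intro that[of "\<lambda>(x, y). T (f x, f y)"]) (simp_all add: iso_pullback restr_eq_iff)
qed

lemma iso_copy_extending_embedding:
  assumes "iso T B" and "inj e" and "\<And>x y. A (e x, e y) = B (x, y)"
  obtains S where "iso S A" "restr S m = restr T m"
proof -
  obtain f where "bij f" and T: "\<And>x y. T (x, y) = B (f x, f y)"
    using assms(1) by (auto simp: iso_def)
  then have "inj_on (e \<circ> f) {..m}"
    using assms(2) \<open>bij f\<close> by (meson bij_is_inj inj_compose inj_on_subset subset_UNIV)
  moreover have "A ((e \<circ> f) x, (e \<circ> f) y) = T (x, y)" for x y
    by (simp add: T assms(3))
  ultimately show thesis
    using that iso_copy_extending_partial_embedding by blast
qed

section \<open>Continuity on Cantor space\<close>

lemma continuous_map_cantor_discrete_if_restr_determined: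
  fixes g :: "struc \<Rightarrow> 'a"
  assumes "\<And>S S'. restr S n = restr S' n \<Longrightarrow> g S = g S'"
  shows "continuous_map cantor (discrete_topology UNIV) g"
  unfolding continuous_map
proof (intro conjI allI impI)
  fix U :: "'a set" assume "openin (discrete_topology UNIV) U"
  show "openin cantor {S \<in> topspace cantor. g S \<in> U}"
  proof (subst openin_subopen, intro ballI)
    fix S assume S: "S \<in> {S \<in> topspace cantor. g S \<in> U}"
    define X where "X p = (if fst p \<le> n \<and> snd p \<le> n then {S p} else UNIV)" for p :: "nat \<times> nat"
    have "openin cantor (\<Pi>\<^sub>E p\<in>UNIV. X p)"
      unfolding cantor_def
    proof (rule product_topology_basis)
      have "{p. X p \<noteq> topspace (discrete_topology UNIV)} \<subseteq> {..n} \<times> {..n}"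
        by (auto simp: X_def)
      then show "finite {p. X p \<noteq> topspace (discrete_topology UNIV)}"
        by (rule finite_subset) simp
    qed simp
    moreover have "S \<in> (\<Pi>\<^sub>E p\<in>UNIV. X p)"
      by (auto simp: X_def)
    moreover have "(\<Pi>\<^sub>E p\<in>UNIV. X p) \<subseteq> {S \<in> topspace cantor. g S \<in> U}"
    proof
      fix S' assume S': "S' \<in> (\<Pi>\<^sub>E p\<in>UNIV. X p)"
      have "S' (x, y) = S (x, y)" if "x \<le> n" "y \<le> n" for x y
        using S' that unfolding X_def PiE_iff by (metis (no_types, lifting) UNIV_I fst_conv singletonD snd_conv)
      then have "g S' = g S"
        by (intro assms) (simp add: restr_eq_iff)
      then show "S' \<in> {S \<in> topspace cantor. g S \<in> U}"
        using S by (simp add: cantor_def)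
    qed
    ultimately show "\<exists>T. openin cantor T \<and> S \<in> T \<and> T \<subseteq> {S \<in> topspace cantor. g S \<in> U}"
      by blast
  qed
qed simp

lemma continuous_map_baire_if_restr_determined:
  assumes "\<And>m. \<exists>n. \<forall>S S'. restr S n = restr S' n \<longrightarrow> \<Gamma> S m = \<Gamma> S' m"
  shows "continuous_map (subtopology cantor K) baire \<Gamma>"
  unfolding baire_def continuous_map_componentwise_UNIV
proof
  fix m
  obtain n where "\<forall>S S'. restr S n = restr S' n \<longrightarrow> \<Gamma> S m = \<Gamma> S' m"
    using assms by blast
  then have "continuous_map cantor (discrete_topology UNIV) (\<lambda>S. \<Gamma> S m)"
    by (intro continuous_map_cantor_discrete_if_restr_determined[of n]) blast
  then show "continuous_map (subtopology cantor K) (discrete_topology UNIV) (\<lambda>S. \<Gamma> S m)"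
    by (rule continuous_map_from_subtopology)
qed

section \<open>Criteria for learnability\<close>

lemma E_learnable_if_complete_invariant:
  assumes cont: "continuous_map (subtopology cantor (LD K)) X \<Gamma>"
    and "symp E" "transp E"
    and invariant: "\<And>S A. A \<in> K \<Longrightarrow> iso S A \<Longrightarrow> E (\<Gamma> S) (\<Gamma> A)"
    and separating: "\<And>A B. A \<in> K \<Longrightarrow> B \<in> K \<Longrightarrow> E (\<Gamma> A) (\<Gamma> B) \<Longrightarrow> iso A B"
  shows "E_learnable X E K"
  unfolding E_learnable_def
proof (intro exI[of _ \<Gamma>] conjI ballI cont)
  fix S S' assume "S \<in> LD K" "S' \<in> LD K"
  then obtain A B where AB: "A \<in> K" "B \<in> K" "iso S A" "iso S' B"
    by (auto simp: LD_def)
  then have E_S: "E (\<Gamma> S) (\<Gamma> A)" and E_S': "E (\<Gamma> S') (\<Gamma> B)"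
    by (simp_all add: invariant)
  show "iso S S' \<longleftrightarrow> E (\<Gamma> S) (\<Gamma> S')"
  proof
    assume "iso S S'"
    then have "E (\<Gamma> S') (\<Gamma> A)"
      using AB by (meson invariant iso_sym iso_trans)
    with E_S show "E (\<Gamma> S) (\<Gamma> S')"
      using \<open>symp E\<close> \<open>transp E\<close> by (meson sympD transpD)
  next
    assume "E (\<Gamma> S) (\<Gamma> S')"
    then have "E (\<Gamma> A) (\<Gamma> B)"
      using E_S E_S' \<open>symp E\<close> \<open>transp E\<close> by (meson sympD transpD)
    then have "iso A B"
      using AB by (simp add: separating)
    then show "iso S S'"
      using AB by (meson iso_sym iso_trans)
  qed
qed

text \<open>Once \<open>M\<close> has guessed \<open>A\<close> on an initial segment of \<open>A\<close>, it is locked on \<open>A\<close> for every copy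
  of \<open>A\<close> starting with that segment; a copy of \<open>A\<close> that continues like a copy of \<open>B\<close> for long
  enough forces \<open>M\<close> to guess \<open>B\<close> as well.\<close>
lemma not_nUs_learnable_if_approximable:
  assumes "A \<in> K"
    and approx: "\<And>n. \<exists>B\<in>K. B \<noteq> A \<and>
      (\<exists>T. iso T B \<and> restr T n = restr A n \<and> (\<forall>m. \<exists>S. iso S A \<and> restr S m = restr T m))"
  shows "\<not> nUs_learnable K"
proof
  assume "nUs_learnable K"
  then obtain M :: "nat \<times> struc \<Rightarrow> struc option" where M:
    "\<And>S A. S \<in> LD K \<Longrightarrow> A \<in> K \<Longrightarrow> iso S A \<Longrightarrow> \<exists>n0. \<forall>n\<ge>n0. M (restr S n) = Some A"
    "\<And>S A n m. S \<in> LD K \<Longrightarrow> A \<in> K \<Longrightarrow> iso S A \<Longrightarrow> M (restr S n) = Some A \<Longrightarrow> n \<le> m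
      \<Longrightarrow> M (restr S m) = Some A"
    unfolding nUs_learnable_def by blast
  have LD: "iso S A \<Longrightarrow> A \<in> K \<Longrightarrow> S \<in> LD K" for S A
    by (auto simp: LD_def)
  obtain n1 where n1: "M (restr A n1) = Some A"
    using M(1) LD \<open>A \<in> K\<close> iso_refl by blast
  obtain B T where B: "B \<in> K" "B \<noteq> A" and T: "iso T B" "restr T n1 = restr A n1"
    and copies: "\<And>m. \<exists>S. iso S A \<and> restr S m = restr T m"
    using approx[of n1] by blast
  obtain n0 where n0: "\<And>n. n \<ge> n0 \<Longrightarrow> M (restr T n) = Some B"
    using M(1) LD B(1) T(1) by blast
  define m where "m = max n0 n1"
  obtain S where S: "iso S A" "restr S m = restr T m"
    using copies by blast
  have "restr S n1 = restr A n1"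
    using restr_eq_le[OF S(2)] T(2) by (simp add: m_def)
  then have "M (restr S n1) = Some A"
    using n1 by simp
  then have "M (restr S m) = Some A"
    using M(2)[of S A n1 m] LD[OF S(1) \<open>A \<in> K\<close>] S(1) \<open>A \<in> K\<close> by (simp add: m_def)
  moreover have "M (restr S m) = Some B"
    using S(2) n0 by (simp add: m_def)
  ultimately show False
    using B(2) by simp
qed

section \<open>Counting non-isolated elements\<close>

definition nonisolated :: "struc \<Rightarrow> nat \<Rightarrow> nat \<Rightarrow> bool" where
  "nonisolated S n y \<longleftrightarrow> (\<exists>z\<le>n. z \<noteq> y \<and> (S (y, z) \<or> S (z, y)))"

definition count_nonisolated :: "struc \<Rightarrow> nat \<Rightarrow> nat" where
  "count_nonisolated S n = card {y. y \<le> n \<and> nonisolated S n y}"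

text \<open>In \<open>P~_0\<close> the pattern is witnessed by the two least elements \<open>0 < 2\<close> of \<open>P_0\<close>; in \<open>P~_k\<close>
  with \<open>k > 0\<close> it is impossible, since \<open>1\<close> and \<open>2\<close> are incomparable there.\<close>
definition P0_pattern :: "struc \<Rightarrow> nat \<Rightarrow> bool" where
  "P0_pattern S n \<longleftrightarrow>
     (\<exists>a\<le>n. \<exists>b\<le>n. a \<noteq> b \<and> S (a, b) \<and> (\<forall>y\<le>n. nonisolated S n y \<longrightarrow> y = a \<or> S (b, y)))"

definition code_E0 :: "struc \<Rightarrow> nat \<Rightarrow> nat" where
  "code_E0 S n = (if P0_pattern S n then 0 else count_nonisolated S n + 1)"

definition code_Erange :: "struc \<Rightarrow> nat \<Rightarrow> nat" where
  "code_Erange S m = (case prod_decode m of (j, n) \<Rightarrow> min j (count_nonisolated S n))"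

lemma nonisolated_restr_cong:
  "restr S n = restr S' n \<Longrightarrow> y \<le> n \<Longrightarrow> nonisolated S n y = nonisolated S' n y"
  by (auto simp: nonisolated_def restr_eq_iff)

lemma count_nonisolated_restr_cong:
  assumes "restr S n = restr S' n"
  shows "count_nonisolated S n = count_nonisolated S' n"
proof -
  have "{y. y \<le> n \<and> nonisolated S n y} = {y. y \<le> n \<and> nonisolated S' n y}"
    using nonisolated_restr_cong[OF assms] by blast
  then show ?thesis
    by (simp add: count_nonisolated_def)
qed

lemma P0_pattern_restr_cong:
  assumes "restr S n = restr S' n"
  shows "P0_pattern S n = P0_pattern S' n"
proof -
  have "P0_pattern T' n" if "P0_pattern T n" "restr T n = restr T' n" for T T'
  proof -
    from \<open>P0_pattern T n\<close> obtain a b where "a \<le> n" "b \<le> n" "a \<noteq> b" "T (a, b)"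
      and "\<forall>y\<le>n. nonisolated T n y \<longrightarrow> y = a \<or> T (b, y)"
      unfolding P0_pattern_def by blast
    moreover note nonisolated_restr_cong[OF \<open>restr T n = restr T' n\<close>]
    moreover have "T (x, y) = T' (x, y)" if "x \<le> n" "y \<le> n" for x y
      using \<open>restr T n = restr T' n\<close> that by (simp add: restr_eq_iff)
    ultimately show ?thesis
      unfolding P0_pattern_def by (metis (no_types, lifting))
  qed
  then show ?thesis
    using assms by metis
qed

lemma code_E0_restr_cong:
  assumes "restr S n = restr S' n"
  shows "code_E0 S n = code_E0 S' n"
  using P0_pattern_restr_cong[OF assms] count_nonisolated_restr_cong[OF assms]
  by (simp add: code_E0_def)

lemma code_Erange_restr_cong:
  assumes "prod_decode m = (j, n)" and "restr S n = restr S' n"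
  shows "code_Erange S m = code_Erange S' m"
  using count_nonisolated_restr_cong[OF assms(2)] by (simp add: code_Erange_def assms(1))

locale copy_of_Ptilde_pos =
  fixes S :: struc and f :: "nat \<Rightarrow> nat" and k :: nat
  assumes bij: "bij f" and S_def: "\<And>x y. S (x, y) = Ptilde k (f x, f y)" and k: "k > 0"
begin

lemma S_iff: "S (x, y) \<longleftrightarrow> x = y \<or> (even (f x) \<and> f x \<le> f y \<and> f y \<le> 2*k + 1)"
  using S_def Ptilde_pos_iff[OF k] bij by (metis bij_is_inj inj_eq)

lemma f_inv: "f (inv f u) = u"
  using bij by (simp add: bij_is_surj surj_f_inv_f)

definition threshold :: nat where
  "threshold = Max (inv f ` {..2*k + 1})"

lemma le_threshold: "f y \<le> 2*k + 1 \<Longrightarrow> y \<le> threshold"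
  unfolding threshold_def using bij
  by (metis Max_ge atMost_iff bij_is_inj finite_atMost finite_imageI image_eqI inv_f_f)

lemma nonisolated_imp_small: "nonisolated S n y \<Longrightarrow> f y \<le> 2*k + 1"
  unfolding nonisolated_def S_iff by auto

lemma nonisolated_if_small:
  assumes n: "threshold \<le> n" and y: "f y \<le> 2*k + 1"
  shows "nonisolated S n y"
proof -
  define z where "z = inv f (if even (f y) then f y + 1 else f y - 1)"
  have fz: "f z = (if even (f y) then f y + 1 else f y - 1)"
    unfolding z_def by (simp add: f_inv)
  then have "f z \<le> 2*k + 1"
    using y by presburger
  then have "z \<le> n"
    using le_threshold n by fastforce
  moreover have "f z \<noteq> f y"
    using fz by (auto elim: oddE)
  then have "z \<noteq> y"
    by blast
  moreover have "S (y, z) \<or> S (z, y)"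
    unfolding S_iff fz using y by presburger
  ultimately show ?thesis
    unfolding nonisolated_def by blast
qed

lemma card_small: "card (f -` {..2*k + 1}) = 2*k + 2"
  using bij by (simp add: card_vimage_inj bij_is_inj bij_is_surj)

lemma count_nonisolated_le: "count_nonisolated S n \<le> 2*k + 2"
proof -
  have "{y. y \<le> n \<and> nonisolated S n y} \<subseteq> f -` {..2*k + 1}"
    using nonisolated_imp_small by auto
  moreover have "finite (f -` {..2*k + 1})"
    using bij by (meson bij_is_inj finite_atMost finite_vimageI)
  ultimately show ?thesis
    unfolding count_nonisolated_def by (metis card_mono card_small)
qed

lemma count_nonisolated_eventually: "threshold \<le> n \<Longrightarrow> count_nonisolated S n = 2*k + 2"
proof -
  assume n: "threshold \<le> n"
  have "{y. y \<le> n \<and> nonisolated S n y} = f -` {..2*k + 1}"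
    using nonisolated_imp_small nonisolated_if_small[OF n] le_threshold n by fastforce
  then show ?thesis
    unfolding count_nonisolated_def by (simp only: card_small)
qed

lemma not_P0_pattern: "threshold \<le> n \<Longrightarrow> \<not> P0_pattern S n"
proof
  assume n: "threshold \<le> n" and "P0_pattern S n"
  then obtain a b where ab: "a \<noteq> b" "S (a, b)"
    and above: "\<And>y. y \<le> n \<Longrightarrow> nonisolated S n y \<Longrightarrow> y = a \<or> S (b, y)"
    unfolding P0_pattern_def by blast
  have "f a \<noteq> f b"
    using ab bij by (metis bij_is_inj inj_eq)
  with ab have fab: "even (f a)" "f a < f b" "f b \<le> 2*k + 1"
    using S_iff by auto
  have "inv f j = a \<or> S (b, inv f j)" if "j \<le> 2*k + 1" for j
    using that above le_threshold nonisolated_if_small[OF n] n f_inv by (metis le_trans)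
  then have small: "f a = j \<or> f b = j \<or> (even (f b) \<and> f b \<le> j)" if "j \<le> 2*k + 1" for j
    using that unfolding S_iff by (metis f_inv)
  show False
    using small[of 0] small[of 1] small[of 2] fab k by auto
qed

lemma code_E0_eventually: "threshold \<le> n \<Longrightarrow> code_E0 S n = 2*k + 3"
  by (simp add: code_E0_def not_P0_pattern count_nonisolated_eventually)

lemma range_code_Erange: "range (code_Erange S) = {..2*k + 2}"
proof
  show "range (code_Erange S) \<subseteq> {..2*k + 2}"
    using count_nonisolated_le by (auto simp: code_Erange_def min_le_iff_disj split: prod.split)
  show "{..2*k + 2} \<subseteq> range (code_Erange S)"
  proof
    fix j assume "j \<in> {..2*k + 2}"
    then have "code_Erange S (prod_encode (j, threshold)) = j"
      by (simp add: code_Erange_def count_nonisolated_eventually)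
    then show "j \<in> range (code_Erange S)"
      by (metis rangeI)
  qed
qed

end

locale copy_of_Ptilde_0 =
  fixes S :: struc and f :: "nat \<Rightarrow> nat"
  assumes bij: "bij f" and S_def: "\<And>x y. S (x, y) = Ptilde 0 (f x, f y)"
begin

lemma S_iff:
  "S (x, y) \<longleftrightarrow> x = y \<or> (even (f x) \<and> even (f y) \<and> even (f x div 2) \<and> f x div 2 \<le> f y div 2 + 1)"
  using S_def Ptilde_0_iff bij by (metis bij_is_inj inj_eq)

lemma f_inv: "f (inv f u) = u"
  using bij by (simp add: bij_is_surj surj_f_inv_f)

lemma P0_pattern_eventually: "max (inv f 0) (inv f 4) \<le> n \<Longrightarrow> P0_pattern S n"
  unfolding P0_pattern_def
proof (intro exI conjI allI impI)
  assume n: "max (inv f 0) (inv f 4) \<le> n"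
  show "inv f 0 \<le> n" "inv f 4 \<le> n"
    using n by auto
  show "inv f 0 \<noteq> inv f 4"
    using f_inv[of 0] f_inv[of 4] by force
  show "S (inv f 0, inv f 4)"
    by (simp add: S_iff f_inv)
  fix y assume "y \<le> n" "nonisolated S n y"
  then have even: "even (f y)"
    unfolding nonisolated_def S_iff by auto
  show "y = inv f 0 \<or> S (inv f 4, y)"
  proof (cases "f y = 0")
    case True
    then show ?thesis
      using bij by (metis bij_is_inj inv_f_f)
  next
    case False
    with even have "2 \<le> f y div 2 + 1"
      by (auto elim!: evenE)
    with even show ?thesis
      by (simp add: S_iff f_inv)
  qed
qed

lemma count_nonisolated_unbounded: "\<exists>n. j \<le> count_nonisolated S n"
proof -
  define A where "A = (\<lambda>i. inv f (4*i)) ` {..Suc j}"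
  define n where "n = Max A"
  have "inj (\<lambda>i. inv f (4*i))"
    by (rule injI) (metis f_inv mult_cancel_left zero_neq_numeral)
  then have card_A: "card A = j + 2"
    by (simp add: A_def card_image inj_on_subset)
  have in_A: "inv f 0 \<in> A" "inv f 4 \<in> A"
    unfolding A_def by (intro image_eqI[of _ _ 0]; simp) (intro image_eqI[of _ _ 1]; simp)
  have "A \<subseteq> {y. y \<le> n \<and> nonisolated S n y}"
  proof
    fix y assume y: "y \<in> A"
    then obtain i where y_def: "y = inv f (4*i)"
      unfolding A_def by auto
    have le_n: "z \<le> n" if "z \<in> A" for z
      using that by (simp add: n_def A_def)
    have "nonisolated S n y"
    proof (cases "i = 0")
      case True
      then have "f (inv f 4) \<noteq> f y"
        by (simp add: y_def f_inv)
      then have "inv f 4 \<noteq> y"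
        by blast
      moreover have "S (y, inv f 4)"
        unfolding y_def True S_iff by (simp add: f_inv)
      ultimately show ?thesis
        using le_n in_A unfolding nonisolated_def by blast
    next
      case False
      then have "f (inv f 0) \<noteq> f y"
        by (simp add: y_def f_inv)
      then have "inv f 0 \<noteq> y"
        by blast
      moreover have "S (inv f 0, y)"
        unfolding y_def S_iff by (simp add: f_inv)
      ultimately show ?thesis
        using le_n in_A unfolding nonisolated_def by blast
    qed
    with y le_n show "y \<in> {y. y \<le> n \<and> nonisolated S n y}"
      by blast
  qed
  then have "card A \<le> count_nonisolated S n"
    unfolding count_nonisolated_def by (intro card_mono) auto
  with card_A show ?thesis
    by (intro exI[of _ n]) simp
qed

lemma code_E0_eventually: "max (inv f 0) (inv f 4) \<le> n \<Longrightarrow> code_E0 S n = 0"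
  by (simp add: code_E0_def P0_pattern_eventually)

lemma range_code_Erange: "range (code_Erange S) = UNIV"
proof -
  have "j \<in> range (code_Erange S)" for j
  proof -
    obtain n where "j \<le> count_nonisolated S n"
      using count_nonisolated_unbounded by blast
    then have "code_Erange S (prod_encode (j, n)) = j"
      by (simp add: code_Erange_def)
    then show ?thesis
      by (metis rangeI)
  qed
  then show ?thesis
    by blast
qed

end

section \<open>Embeddings between \<open>P~_0\<close> and \<open>P~_k\<close>\<close>

text \<open>The order \<open>P_k\<close> is a chain \<open>0 < 2 < \<dots> < 2k\<close> with \<open>2i + 1\<close> hanging above \<open>2i\<close>, whereas in
  \<open>P_0\<close> the element \<open>2i - 1\<close> hangs above \<open>2i\<close>; \<open>shift_odd\<close> and \<open>shift_even\<close> move the hanging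
  elements, resp. the chain, by two to translate between the two conventions.\<close>
definition shift_odd :: "nat \<Rightarrow> nat" where
  "shift_odd m = (if even m then m else m + 2)"

definition shift_even :: "nat \<Rightarrow> nat" where
  "shift_even a = (if even a then a + 2 else a)"

definition P0_into_Pk :: "nat \<Rightarrow> nat \<Rightarrow> nat" where
  "P0_into_Pk k x = (if even x then shift_odd (x div 2) else 2*k + 2 + x)"

definition Pk_into_P0 :: "nat \<Rightarrow> nat \<Rightarrow> nat" where
  "Pk_into_P0 k a = (if a \<le> 2*k + 1 then 2 * shift_even a else 2*a + 1)"

lemma Ptilde_0_even_iff: "Ptilde 0 (2*m, 2*m') \<longleftrightarrow> m = m' \<or> (even m \<and> m \<le> m' + 1)"
  by (simp add: Ptilde_0_iff)

lemma Ptilde_0_odd_left: "odd x \<Longrightarrow> Ptilde 0 (x, y) \<longleftrightarrow> x = y"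
  by (auto simp: Ptilde_0_iff)

lemma Ptilde_0_odd_right: "odd y \<Longrightarrow> Ptilde 0 (x, y) \<longleftrightarrow> x = y"
  by (auto simp: Ptilde_0_iff)

lemma shift_odd_iff:
  "shift_odd m = shift_odd m' \<or> (even (shift_odd m) \<and> shift_odd m \<le> shift_odd m')
     \<longleftrightarrow> m = m' \<or> (even m \<and> m \<le> m' + 1)"
  unfolding shift_odd_def by (cases "even m"; cases "even m'") (simp_all; presburger)+

lemma shift_even_iff:
  "shift_even a = shift_even b \<or> (even (shift_even a) \<and> shift_even a \<le> shift_even b + 1)
     \<longleftrightarrow> a = b \<or> (even a \<and> a \<le> b)"
  unfolding shift_even_def by (cases "even a"; cases "even b") (simp_all; presburger)+

lemma P0_into_Pk_preserves:
  assumes "x \<le> n" "y \<le> n"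
  shows "Ptilde (n + 1) (P0_into_Pk (n + 1) x, P0_into_Pk (n + 1) y) = Ptilde 0 (x, y)"
proof -
  have small: "shift_odd (z div 2) \<le> 2*(n + 1) + 1" if "z \<le> n" for z
  proof -
    have "z div 2 \<le> n"
      using that by (meson div_le_dividend le_trans)
    then show ?thesis
      by (simp add: shift_odd_def)
  qed
  have parity: "even (shift_odd m) = even m" for m
    by (simp add: shift_odd_def)
  note Ptilde_pos = Ptilde_pos_iff[of "n + 1", simplified]
  show ?thesis
  proof (cases "even x"; cases "even y")
    assume "even x" "even y"
    then obtain m m' where "x = 2*m" "y = 2*m'"
      by (auto elim!: evenE)
    then show ?thesis
      using small[of y] assms shift_odd_iff[of m m']
      by (simp add: Ptilde_pos Ptilde_0_even_iff P0_into_Pk_def parity)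
  next
    assume "even x" "odd y"
    then show ?thesis
      using small[of x] assms by (auto simp: Ptilde_pos Ptilde_0_odd_right P0_into_Pk_def)
  next
    assume "odd x" "even y"
    then show ?thesis
      using small[of y] assms by (auto simp: Ptilde_pos Ptilde_0_odd_left P0_into_Pk_def)
  next
    assume "odd x" "odd y"
    then show ?thesis
      by (auto simp: Ptilde_pos Ptilde_0_odd_left P0_into_Pk_def)
  qed
qed

lemma inj_on_P0_into_Pk: "inj_on (P0_into_Pk (n + 1)) {..n}"
proof (rule inj_onI)
  fix x y assume "x \<in> {..n}" "y \<in> {..n}" and eq: "P0_into_Pk (n + 1) x = P0_into_Pk (n + 1) y"
  then have "Ptilde 0 (x, y)" "Ptilde 0 (y, x)"
    using P0_into_Pk_preserves[of x n y] P0_into_Pk_preserves[of y n x] by (auto simp: Ptilde_pos_iff)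
  then show "x = y"
    unfolding Ptilde_0_iff by (auto elim!: evenE)
qed

lemma inj_Pk_into_P0: "inj (Pk_into_P0 k)"
  by (rule injI) (auto simp: Pk_into_P0_def shift_even_def split: if_splits, presburger+)

lemma Pk_into_P0_preserves:
  assumes "k > 0"
  shows "Ptilde 0 (Pk_into_P0 k a, Pk_into_P0 k b) = Ptilde k (a, b)"
proof (cases "a \<le> 2*k + 1 \<and> b \<le> 2*k + 1")
  case True
  then show ?thesis
    using shift_even_iff[of a b]
    by (simp add: Ptilde_pos_iff[OF assms] Pk_into_P0_def Ptilde_0_even_iff)
next
  case False
  then have "odd (Pk_into_P0 k a) \<or> odd (Pk_into_P0 k b)"
    by (auto simp: Pk_into_P0_def)
  then have "Ptilde 0 (Pk_into_P0 k a, Pk_into_P0 k b) \<longleftrightarrow> a = b"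
    using inj_Pk_into_P0 by (auto simp: Ptilde_0_odd_left Ptilde_0_odd_right inj_eq)
  with False show ?thesis
    by (auto simp: Ptilde_pos_iff[OF assms])
qed

section \<open>Learnability of the family\<close>

lemma iso_Ptilde_cases:
  assumes "iso S (Ptilde k)"
  obtains f where "k = 0" "copy_of_Ptilde_0 S f" | f where "copy_of_Ptilde_pos S f k"
  using assms unfolding iso_def copy_of_Ptilde_0_def copy_of_Ptilde_pos_def by (cases "k = 0") auto

lemma code_E0_eventually:
  assumes "iso S (Ptilde k)"
  shows "\<exists>N. \<forall>n\<ge>N. code_E0 S n = (if k = 0 then 0 else 2*k + 3)"
  using assms
proof (cases rule: iso_Ptilde_cases)
  case (1 f)
  then show ?thesis
    using copy_of_Ptilde_0.code_E0_eventually by metis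
next
  case (2 f)
  then show ?thesis
    using copy_of_Ptilde_pos.code_E0_eventually copy_of_Ptilde_pos.k by fastforce
qed

lemma range_code_Erange:
  assumes "iso S (Ptilde k)"
  shows "range (code_Erange S) = (if k = 0 then UNIV else {..2*k + 2})"
  using assms
proof (cases rule: iso_Ptilde_cases)
  case (1 f)
  then show ?thesis
    using copy_of_Ptilde_0.range_code_Erange by simp
next
  case (2 f)
  then show ?thesis
    using copy_of_Ptilde_pos.range_code_Erange copy_of_Ptilde_pos.k by fastforce
qed

lemma E0_iff_eventually_const:
  assumes "\<exists>N. \<forall>n\<ge>N. p n = c" and "\<exists>N. \<forall>n\<ge>N. q n = d"
  shows "E0 p q \<longleftrightarrow> c = d"
proof -
  obtain N N' where "\<forall>n\<ge>N. p n = c" "\<forall>n\<ge>N'. q n = d"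
    using assms by blast
  then have "\<forall>n\<ge>max N N'. p n = c \<and> q n = d"
    by simp
  then show ?thesis
    unfolding E0_def by (metis max.commute nat_le_linear)
qed

lemma symp_E0: "symp E0"
  unfolding symp_def E0_def by metis

lemma transp_E0: "transp E0"
  unfolding transp_def E0_def by (metis max.bounded_iff)

lemma E_learnable_baire_E0_Pfam: "E_learnable baire E0 Pfam"
proof (rule E_learnable_if_complete_invariant[OF _ symp_E0 transp_E0])
  show "continuous_map (subtopology cantor (LD Pfam)) baire code_E0"
    using code_E0_restr_cong by (intro continuous_map_baire_if_restr_determined) blast
  show "E0 (code_E0 S) (code_E0 A)" if A: "A \<in> Pfam" and S: "iso S A" for S A
  proof -
    obtain k where "A = Ptilde k"
      using A by (auto simp: Pfam_def)
    then show ?thesis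
      using E0_iff_eventually_const[OF code_E0_eventually code_E0_eventually[OF iso_refl]] S
      by simp
  qed
  show "iso A B" if "A \<in> Pfam" "B \<in> Pfam" and E: "E0 (code_E0 A) (code_E0 B)" for A B
  proof -
    obtain k j where "A = Ptilde k" "B = Ptilde j"
      using \<open>A \<in> Pfam\<close> \<open>B \<in> Pfam\<close> by (auto simp: Pfam_def)
    with E have "(if k = 0 then 0 else 2*k + 3) = (if j = 0 then 0 else 2*j + 3)"
      using E0_iff_eventually_const[OF code_E0_eventually[OF iso_refl] code_E0_eventually[OF iso_refl]]
      by simp
    then have "k = j"
      by (auto split: if_splits)
    then show ?thesis
      using \<open>A = _\<close> \<open>B = _\<close> iso_refl by simp
  qed
qed

lemma E_learnable_baire_Erange_Pfam: "E_learnable baire Erange Pfam"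
proof (rule E_learnable_if_complete_invariant)
  show "continuous_map (subtopology cantor (LD Pfam)) baire code_Erange"
    using code_Erange_restr_cong
    by (intro continuous_map_baire_if_restr_determined) (metis prod.collapse)
  show "symp Erange" "transp Erange"
    by (auto simp: symp_def transp_def Erange_def)
  show "Erange (code_Erange S) (code_Erange A)" if A: "A \<in> Pfam" and S: "iso S A" for S A
  proof -
    obtain k where "A = Ptilde k"
      using A by (auto simp: Pfam_def)
    then show ?thesis
      using range_code_Erange[of S k] range_code_Erange[OF iso_refl, of k] S
      by (simp add: Erange_def)
  qed
  show "iso A B" if "A \<in> Pfam" "B \<in> Pfam" and E: "Erange (code_Erange A) (code_Erange B)" for A B
  proof -
    obtain k j where "A = Ptilde k" "B = Ptilde j"
      using \<open>A \<in> Pfam\<close> \<open>B \<in> Pfam\<close> by (auto simp: Pfam_def)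
    with E have "(if k = 0 then UNIV else {..2*k + 2}) = (if j = 0 then UNIV else {..2*j + 2})"
      by (simp add: Erange_def range_code_Erange[OF iso_refl])
    then have "k = j"
      using infinite_UNIV_nat by (auto split: if_splits)
    then show ?thesis
      using \<open>A = _\<close> \<open>B = _\<close> iso_refl by simp
  qed
qed

lemma Ptilde_pos_neq_Ptilde_0:
  assumes "k > 0"
  shows "Ptilde k \<noteq> Ptilde 0"
proof -
  have "Ptilde k (0, 1)" "\<not> Ptilde 0 (0, 1)"
    by (simp_all add: Ptilde_pos_iff[OF assms] Ptilde_0_iff)
  then show ?thesis
    by metis
qed

lemma not_nUs_learnable_Pfam: "\<not> nUs_learnable Pfam"
proof (rule not_nUs_learnable_if_approximable)
  show "Ptilde 0 \<in> Pfam"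
    by (simp add: Pfam_def)
  fix n :: nat
  let ?k = "n + 1"
  obtain T where T: "iso T (Ptilde ?k)" "restr T n = restr (Ptilde 0) n"
    using iso_copy_extending_partial_embedding[where T = "Ptilde ?k" and S = "Ptilde 0",
        OF inj_on_P0_into_Pk P0_into_Pk_preserves]
    by blast
  have "\<exists>S. iso S (Ptilde 0) \<and> restr S m = restr T m" for m
    using iso_copy_extending_embedding[where A = "Ptilde 0",
        OF T(1) inj_Pk_into_P0 Pk_into_P0_preserves[of ?k]]
    by auto
  then show "\<exists>B\<in>Pfam. B \<noteq> Ptilde 0 \<and>
      (\<exists>T. iso T B \<and> restr T n = restr (Ptilde 0) n \<and> (\<forall>m. \<exists>S. iso S (Ptilde 0) \<and> restr S m = restr T m))"
    using T Ptilde_pos_neq_Ptilde_0[of ?k] by (auto simp: Pfam_def)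
qed

theorem mainTheorem13:
  shows "E_learnable baire E0 Pfam \<and> E_learnable baire Erange Pfam \<and> \<not> nUs_learnable Pfam"
  using E_learnable_baire_E0_Pfam E_learnable_baire_Erange_Pfam not_nUs_learnable_Pfam by blast

end
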